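(* Let $G$ be a circle of circumference $1$, let $\mathbf{x}\in G^n$ be such that the agents are not on one semicircle, and let $y\in G$. Let $\mathbf{x}\cup\{y\}\in G^{n+1}$ be the profile $\mathbf{x}$ with one additional agent located at $y$. Then $\mathrm{cost}(\mathrm{rc}(\mathbf{x}),y)\ge\mathrm{cost}(\mathrm{rc}(\mathbf{x}\cup\{y\}),y)$.
   Context: $d(x,y)$ is the shorter-arc length; $\hat x$ the antipode of $x$; $\mathrm{cost}(P,y)=\mathbb{E}_{z\sim P}[d(y,z)]$. Agents are on one semicircle if all locations lie in some closed arc of length $1/2$. RC mechanism on a profile $(z_1,\dots,z_m)$ not on one semicircle: the antipodal points $\hat{z}_1,\dots,\hat{z}_m$ partition $G$ into arcs between cyclically consecutive antipodal points; $\mathrm{rc}$ returns the midpoint of each such arc with probability equal to its length. *)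

theory Defs
  imports Complex_Main
begin

text \<open>The circle G of circumference 1 is represented by the half-open interval [0,1),
  a point t standing for the point at arc-length t from a fixed origin (counterclockwise).\<close>

definition G :: "real set" where
  "G = {0..<1}"

definition cdist :: "real \<Rightarrow> real \<Rightarrow> real" where
  "cdist x y = min (frac (x - y)) (1 - frac (x - y))"

definition antipode :: "real \<Rightarrow> real" where
  "antipode x = frac (x + 1/2)"

definition on_one_semicircle :: "real list \<Rightarrow> bool" where
  "on_one_semicircle zs \<longleftrightarrow> (\<exists>a\<in>G. \<forall>z\<in>set zs. frac (z - a) \<le> 1/2)"

text \<open>A finitely supported distribution on G, given as a list of (point, probability) pairs.\<close>
type_synonym fdist = "(real \<times> real) list"

definition cost :: "fdist \<Rightarrow> real \<Rightarrow> real" where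
  "cost P y = (\<Sum>(z, w) \<leftarrow> P. w * cdist y z)"

text \<open>RC mechanism: the distinct antipodal points, sorted, a_0 < ... < a_{k-1}, cut G into the
  arcs [a_i, a_{i+1}] (i < k-1) and the wrap-around arc [a_{k-1}, a_0 + 1].  Each arc contributes
  its midpoint with probability equal to its length.\<close>
definition rc :: "real list \<Rightarrow> fdist" where
  "rc zs = (let A = sorted_list_of_set (antipode ` set zs); k = length A in
     map (\<lambda>i. let s = A ! i; e = (if Suc i < k then A ! Suc i else A ! 0 + 1)
               in (frac ((s + e) / 2), e - s)) [0..<k])"

end

theory Submission
  imports Defs
begin

(* Lift the circle to the reals.  If a_0 < ... < a_{k-1} are the distinct
   antipodal points, the RC lottery puts weight e - s on the midpoint of each arc [s,e]
   between consecutive cut points of the cyclic list a_0, ..., a_{k-1}, a_0 + 1, so its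
   expected distance to y is a sum of "arc costs" along that list (cost_rc_eq_cyclic_cost).
   Adding an agent at y adds the single cut point c = antipode y.  If c is already a cut
   point nothing changes; otherwise c splits exactly one arc [s,e] into [s,c] and [c,e].
   Since y is at distance 1/2 from c, a point at offset u from c is at distance 1/2 - |u|
   from y, and with a = c - s, b = e - c the claim reduces to
     a (1 - a)/2 + b (1 - b)/2 <= (a + b) (1 - |a - b|)/2,
   i.e. (a + b) |a - b| <= a^2 + b^2 (arc_cost_split_le). *)

definition arc_cost :: "real \<Rightarrow> real \<Rightarrow> real \<Rightarrow> real" where
  "arc_cost y s e = (e - s) * cdist y (frac ((s + e) / 2))"

fun chain_cost :: "real \<Rightarrow> real list \<Rightarrow> real" where
  "chain_cost y (s # e # rest) = arc_cost y s e + chain_cost y (e # rest)"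
| "chain_cost y _ = 0"

definition cyclic_cost :: "real \<Rightarrow> real list \<Rightarrow> real" where
  "cyclic_cost y A = chain_cost y (A @ [hd A + 1])"

lemma chain_cost_append:
  "chain_cost y (xs @ a # ys) = chain_cost y (xs @ [a]) + chain_cost y (a # ys)"
proof (induction xs)
  case (Cons x xs)
  then show ?case by (cases xs) auto
qed simp

lemma chain_cost_nth:
  "chain_cost y l = (\<Sum>i<length l - 1. arc_cost y (l ! i) (l ! Suc i))"
proof (induction y l rule: chain_cost.induct)
  case (1 y s e rest)
  then show ?case by (simp add: sum.lessThan_Suc_shift del: sum.lessThan_Suc)
qed auto

lemma cost_rc_eq_cyclic_cost:
  assumes A: "sorted_list_of_set (antipode ` set zs) = A" and "A \<noteq> []"
  shows "cost (rc zs) y = cyclic_cost y A"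
proof -
  let ?k = "length A"
  let ?e = "\<lambda>i. if Suc i < ?k then A ! Suc i else A ! 0 + 1"
  have "cost (rc zs) y = (\<Sum>i\<leftarrow>[0..<?k]. arc_cost y (A ! i) (?e i))"
    unfolding cost_def rc_def A Let_def arc_cost_def
    by (simp add: comp_def case_prod_unfold mult.commute)
  also have "\<dots> = (\<Sum>i<?k. arc_cost y (A ! i) (?e i))"
    by (simp add: sum_list_sum_nth atLeast0LessThan) (intro sum.cong, auto)
  also have "\<dots> = cyclic_cost y A"
    unfolding cyclic_cost_def chain_cost_nth using \<open>A \<noteq> []\<close>
    by (intro sum.cong) (auto simp: nth_append hd_conv_nth)
  finally show ?thesis .
qed

lemma arc_cost_shift: "arc_cost y (s + 1) (e + 1) = arc_cost y s e"
proof -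
  have "(s + 1 + (e + 1)) / 2 = (s + e) / 2 + 1" by simp
  then show ?thesis unfolding arc_cost_def by (simp only: frac_1_eq) simp
qed

lemma cdist_near_antipode:
  assumes "frac (y - t) = 1/2" and "\<bar>t - z\<bar> < 1/2"
  shows "cdist y (frac z) = 1/2 - \<bar>t - z\<bar>"
proof -
  have "y - z = of_int \<lfloor>y - t\<rfloor> + (1/2 + (t - z))"
    using assms(1) unfolding frac_def by (simp add: algebra_simps)
  then have "frac (y - z) = frac (1/2 + (t - z))"
    by (simp only: frac_add_of_int_left)
  also have "\<dots> = 1/2 + (t - z)"
    using assms(2) unfolding abs_less_iff by (subst frac_eq) linarith
  finally have "frac (y - frac z) = 1/2 + (t - z)"
    by (simp only: frac_diff_simp)
  then show ?thesis
    unfolding cdist_def by (simp add: min_def abs_if)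
qed

text \<open>The algebraic core: for arc lengths a, b > 0 the two halves cost together at most as
  much as the whole arc, whose midpoint lies at offset |a - b|/2 from the split point.\<close>
lemma split_weight_le:
  fixes a b :: real
  assumes "0 \<le> a" and "0 \<le> b"
  shows "a * (1/2 - a/2) + b * (1/2 - b/2) \<le> (a + b) * (1/2 - \<bar>a - b\<bar> / 2)"
proof -
  have "(a + b) * \<bar>a - b\<bar> \<le> a * a + b * b"
    using assms by (cases "a \<le> b") (simp_all add: algebra_simps mult_nonneg_nonneg)
  then show ?thesis by (simp add: algebra_simps)
qed

lemma arc_cost_split_le:
  assumes "s < c" "c < e" "c - s < 1" "e - c < 1" and anti: "frac (y - c) = 1/2"
  shows "arc_cost y s c + arc_cost y c e \<le> arc_cost y s e"
proof -
  define a b where "a = c - s" and "b = e - c"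
  have offsets: "\<bar>c - (s + c)/2\<bar> = a / 2" "\<bar>c - (c + e)/2\<bar> = b / 2"
    "\<bar>c - (s + e)/2\<bar> = \<bar>a - b\<bar> / 2"
    using assms unfolding a_def b_def by (simp_all add: abs_if field_simps)
  have small: "a / 2 < 1/2" "b / 2 < 1/2" "\<bar>a - b\<bar> / 2 < 1/2"
    using assms unfolding a_def b_def by (simp_all add: abs_if)
  have "arc_cost y s c = a * (1/2 - a/2)"
    using cdist_near_antipode[OF anti, of "(s + c)/2"] offsets small
    unfolding arc_cost_def a_def by simp
  moreover have "arc_cost y c e = b * (1/2 - b/2)"
    using cdist_near_antipode[OF anti, of "(c + e)/2"] offsets small
    unfolding arc_cost_def b_def by simp
  moreover have "arc_cost y s e = (a + b) * (1/2 - \<bar>a - b\<bar> / 2)"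
    using cdist_near_antipode[OF anti, of "(s + e)/2"] offsets small
    unfolding arc_cost_def by (simp add: a_def b_def)
  moreover have "0 \<le> a" "0 \<le> b" using assms unfolding a_def b_def by auto
  ultimately show ?thesis using split_weight_le by simp
qed

lemma chain_cost_split_le:
  assumes "s < c" "c < e" "c - s < 1" "e - c < 1" "frac (y - c) = 1/2"
  shows "chain_cost y (p @ s # c # e # q) \<le> chain_cost y (p @ s # e # q)"
  using arc_cost_split_le[OF assms] chain_cost_append[of y p s "c # e # q"]
    chain_cost_append[of y p s "e # q"] by simp

lemma insort_takeWhile_dropWhile:
  fixes x :: "'a :: linorder"
  shows "insort x A = takeWhile (\<lambda>u. u < x) A @ x # dropWhile (\<lambda>u. u < x) A"
  by (induction A) auto

lemma sorted_dropWhile_ge: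
  fixes x :: "'a :: linorder"
  assumes "sorted A" and "u \<in> set (dropWhile (\<lambda>u. u < x) A)"
  shows "x \<le> u"
  using assms by (induction A) (auto split: if_splits)

text \<open>A new cut point below all others (in [0,1)) lies on the wrap-around arc from the last
  cut point to the first one plus 1; shifted by a full turn, it splits that arc.\<close>
lemma cyclic_cost_cons_le:
  assumes "A \<noteq> []" and A01: "set A \<subseteq> {0..<1}" and c01: "c \<in> {0..<1}"
    and above: "\<forall>u\<in>set A. c < u" and anti: "frac (y - c) = 1/2"
  shows "cyclic_cost y (c # A) \<le> cyclic_cost y A"
proof -
  obtain a0 A' where a0: "A = a0 # A'" using \<open>A \<noteq> []\<close> by (cases A) auto
  obtain p al where al: "A = p @ [al]" using \<open>A \<noteq> []\<close> by (cases A rule: rev_cases) auto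
  have "a0 \<in> set A" "al \<in> set A" by (simp add: a0, simp add: al)
  then have bounds: "c < a0" "a0 < 1" "c < al" "al < 1" using above A01 by auto
  have "cyclic_cost y (c # A) = arc_cost y (c + 1) (a0 + 1) + chain_cost y (A @ [c + 1])"
    unfolding cyclic_cost_def using a0 arc_cost_shift by simp
  also have "\<dots> = chain_cost y (p @ al # (c + 1) # (a0 + 1) # [])"
    using chain_cost_append[of y A "c + 1" "[a0 + 1]"] al by simp
  also have "\<dots> \<le> chain_cost y (p @ al # (a0 + 1) # [])"
  proof (rule chain_cost_split_le)
    have "y - (c + 1) = (y - c) + of_int (-1)" by simp
    then show "frac (y - (c + 1)) = 1/2" using anti by (simp only: frac_add_of_int_right)
  qed (use bounds c01 in auto)
  also have "\<dots> = cyclic_cost y A"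
  proof -
    have "hd A = a0" using a0 by simp
    then show ?thesis unfolding cyclic_cost_def by (simp add: al)
  qed
  finally show ?thesis .
qed

text \<open>Adding a new cut point antipodal to y to a sorted list of cut points in [0,1) does not
  increase the cyclic cost: it splits the one arc containing it.  The new point is placed
  after the points below it and before those above it.\<close>
lemma cyclic_cost_insort_le:
  assumes "sorted A" "A \<noteq> []" and A01: "set A \<subseteq> {0..<1}"
    and c01: "c \<in> {0..<1}" and "c \<notin> set A" and anti: "frac (y - c) = 1/2"
  shows "cyclic_cost y (insort c A) \<le> cyclic_cost y A"
proof -
  define L R where "L = takeWhile (\<lambda>u. u < c) A" and "R = dropWhile (\<lambda>u. u < c) A"
  have A_LR: "A = L @ R" and ins: "insort c A = L @ c # R"
    unfolding L_def R_def by (simp, rule insort_takeWhile_dropWhile)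
  have L_below: "u < c" if "u \<in> set L" for u
    using that set_takeWhileD unfolding L_def R_def by fastforce
  have R_above: "c < u" if "u \<in> set R" for u
    using that sorted_dropWhile_ge[OF \<open>sorted A\<close>] set_dropWhileD \<open>c \<notin> set A\<close>
    unfolding L_def R_def by (metis order_le_less)
  show ?thesis
  proof (cases "L = []")
    case True
    then have "insort c A = c # A" "\<forall>u\<in>set A. c < u" using ins A_LR R_above by simp_all
    then show ?thesis using cyclic_cost_cons_le assms by simp
  next
    case False
    text \<open>c lies between the last cut point a below it and the next cut point b above it.\<close>
    obtain p a where a: "L = p @ [a]" using False by (cases L rule: rev_cases) auto
    define h where "h = hd L"
    obtain b q where b: "R @ [h + 1] = b # q" by (cases "R @ [h + 1]") auto
    have "a \<in> set L" "h \<in> set L" unfolding h_def by (simp add: a, rule hd_in_set[OF False])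
    then have a_bounds: "a < c" "0 \<le> a" and h_bounds: "h < c" "0 \<le> h"
      using L_below A01 A_LR by auto
    have b_bounds: "c < b \<and> b - c < 1"
    proof (cases "R = []")
      case True
      then show ?thesis using b h_bounds c01 by auto
    next
      case False
      then have "b \<in> set R" using b by (cases R) auto
      then show ?thesis using R_above A01 A_LR c01 by auto
    qed
    have hd_eq: "hd (insort c A) = h" "hd A = h"
      using False unfolding h_def by (simp add: ins, simp add: A_LR)
    have "cyclic_cost y (insort c A) = chain_cost y (p @ a # c # b # q)"
      unfolding cyclic_cost_def hd_eq unfolding ins a using b by simp
    also have "\<dots> \<le> chain_cost y (p @ a # b # q)"
      using a_bounds b_bounds c01 anti by (intro chain_cost_split_le) auto
    also have "\<dots> = cyclic_cost y A"
      unfolding cyclic_cost_def hd_eq unfolding A_LR a using b by simp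
    finally show ?thesis .
  qed
qed

lemma antipode_in_G: "antipode x \<in> {0..<1}"
  unfolding antipode_def by (simp add: frac_lt_1)

lemma frac_diff_antipode: "frac (y - antipode y) = 1/2"
proof -
  have "y - antipode y = of_int (\<lfloor>y + 1/2\<rfloor> - 1) + 1/2"
    unfolding antipode_def frac_def by simp
  then show ?thesis by (simp only: frac_add_of_int_left) (simp add: frac_eq)
qed

lemma not_on_one_semicircle_nonempty:
  assumes "\<not> on_one_semicircle zs"
  shows "zs \<noteq> []"
proof
  assume "zs = []"
  moreover have "(0::real) \<in> G" by (simp add: G_def)
  ultimately have "on_one_semicircle zs" unfolding on_one_semicircle_def by auto
  with assms show False by simp
qed

theorem mainTheorem15:
  fixes xs :: "real list" and y :: real
  assumes "set xs \<subseteq> G"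
    and "\<not> on_one_semicircle xs"
    and "y \<in> G"
  shows "cost (rc xs) y \<ge> cost (rc (xs @ [y])) y"
proof (cases "antipode y \<in> antipode ` set xs")
  case True
  then have "antipode ` set (xs @ [y]) = antipode ` set xs" by auto
  then show ?thesis unfolding rc_def by simp
next
  case False
  define A where "A = sorted_list_of_set (antipode ` set xs)"
  have "A \<noteq> []" unfolding A_def using not_on_one_semicircle_nonempty[OF assms(2)] by simp
  have "sorted_list_of_set (antipode ` set (xs @ [y])) = insort (antipode y) A"
    unfolding A_def using False by (simp add: sorted_list_of_set_insert)
  then have "cost (rc (xs @ [y])) y = cyclic_cost y (insort (antipode y) A)"
    by (rule cost_rc_eq_cyclic_cost) simp
  also have "\<dots> \<le> cyclic_cost y A"
    using \<open>A \<noteq> []\<close> False antipode_in_G frac_diff_antipode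
    by (intro cyclic_cost_insort_le) (auto simp: A_def)
  also have "\<dots> = cost (rc xs) y"
    using cost_rc_eq_cyclic_cost[OF A_def[symmetric] \<open>A \<noteq> []\<close>] by simp
  finally show ?thesis .
qed

end
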